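(* Let $f:\mathbb{R}^n\times D\to\mathbb{R}^n$ and a forcing function $d:[0,\infty)\to D$ be given, and consider the Cauchy problem $\dot y(t)=f(y(t),d(t))$, $y(t_0)=y_0$. Denote its exact solution by $\tilde y(t,y_0,t_0)$ (so $\tilde y(t_0,y_0,t_0)=y_0$). Let $M\subset\mathbb{R}^n$ be a manifold such that $\tilde y(t,y_0,t_0)\in M$ for all $t\ge t_0$ and all $y_0\in M$. Let $y_0\in M$ and let $y(t)=\tilde y(t,y_0,0)$ be the exact solution with initial time $0$. Assume $y$ is locally exponentially stable on $M$, i.e. there exist $\delta>0$, $\gamma>0$, $C_1<\infty$ such that $$\|\tilde y(t,y^{(1)}_0,t_0)-\tilde y(t,y^{(2)}_0,t_0)\|\le C_1 e^{-\gamma(t-t_0)}\|y^{(1)}_0-y^{(2)}_0\|$$ for all $t\ge t_0\ge 0$ and all $y^{(1)}_0,y^{(2)}_0\in M$ with $\|y^{(1)}_0-y(t_0)\|\le\delta$, $\|y^{(2)}_0-y(t_0)\|\le\delta$. Consider a numerical algorithm on $[0,T]$ with constant time step $\Delta t>0$, time instances ${}^n t=n\Delta t$, $n=0,1,\dots,N$, ${}^N t=T$, producing approximations ${}^n y$ with ${}^0 y=y_0$, such that for some constant $C_2<\infty$ the one-step error satisfies $$\|\tilde y({}^{n+1}t,{}^n y,{}^n t)-{}^{n+1}y\|\le C_2(\Delta t)^2\quad\text{for all } n,$$ and such that every numerical approximation lies exactly on the manifold, ${}^n y\in M$ for all $n$. Then there exists a constant $C<\infty$, not depending on the length $T$ of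 the time interval, such that $\|{}^n y-y({}^n t)\|\le C\,\Delta t$ for all $n$, as $\Delta t\to 0$.
   Context: $\|\cdot\|$ denotes a norm on $\mathbb{R}^n$. The system is a system with input: $d(t)$ is a given forcing function, and the initial value is given. "As $\Delta t\to0$" means the estimate holds for all sufficiently small $\Delta t$. *)

theory Defs
  imports "HOL-Analysis.Analysis"
begin

definition solves_ivp :: "('a::real_normed_vector \<Rightarrow> 'd \<Rightarrow> 'a) \<Rightarrow> (real \<Rightarrow> 'd) \<Rightarrow> real \<Rightarrow> 'a \<Rightarrow> (real \<Rightarrow> 'a) \<Rightarrow> bool" where
  "solves_ivp f d t0 y0 z \<longleftrightarrow> z t0 = y0 \<and>
     (\<forall>t\<ge>t0. (z has_vector_derivative f (z t) (d t)) (at t within {t0..}))"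

definition exact_solution_map :: "('a::real_normed_vector \<Rightarrow> 'd \<Rightarrow> 'a) \<Rightarrow> (real \<Rightarrow> 'd) \<Rightarrow> 'a set \<Rightarrow> (real \<Rightarrow> 'a \<Rightarrow> real \<Rightarrow> 'a) \<Rightarrow> bool" where
  "exact_solution_map f d M ytil \<longleftrightarrow>
     (\<forall>t0\<ge>0. \<forall>y0\<in>M. solves_ivp f d t0 y0 (\<lambda>t. ytil t y0 t0) \<and>
        (\<forall>z. solves_ivp f d t0 y0 z \<longrightarrow> (\<forall>t\<ge>t0. z t = ytil t y0 t0)))"

end

theory Submission
  imports Defs
begin

text \<open>Lady Windermere's fan. Write the global error at step n as a telescoping sum of the
  local errors committed at steps j < n, each transported to time n by the exact flow. As long
  as the numerical solution stays within \<delta> of the exact one, the flow contracts the j-th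
  local error (of size O(h^2)) by the factor exp(-\<gamma> h)^(n-j-1), and the geometric
  sum of these factors is O(1/h) uniformly in n. This gives an O(h) bound independent of T,
  which by strong induction on n keeps the numerical solution inside the \<delta>-tube once h is
  small.\<close>

lemma exact_solution_map_initial:
  assumes "exact_solution_map f d M ytil" "0 \<le> t0" "x \<in> M"
  shows "ytil t0 x t0 = x"
  using assms unfolding exact_solution_map_def solves_ivp_def by blast

lemma exact_solution_map_flow:
  assumes ex: "exact_solution_map f d M ytil"
    and inv: "\<And>t0 x t. 0 \<le> t0 \<Longrightarrow> x \<in> M \<Longrightarrow> t0 \<le> t \<Longrightarrow> ytil t x t0 \<in> M"
    and "0 \<le> s" "s \<le> t" "t \<le> u" "x \<in> M"
  shows "ytil u x s = ytil u (ytil t x s) t"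
proof -
  have sol: "solves_ivp f d s x (\<lambda>r. ytil r x s)"
    using ex assms unfolding exact_solution_map_def by blast
  have "solves_ivp f d t (ytil t x s) (\<lambda>r. ytil r x s)"
    unfolding solves_ivp_def
  proof (intro conjI allI impI)
    fix r assume "t \<le> r"
    then have "((\<lambda>r. ytil r x s) has_vector_derivative f (ytil r x s) (d r)) (at r within {s..})"
      using sol assms unfolding solves_ivp_def by auto
    then show "((\<lambda>r. ytil r x s) has_vector_derivative f (ytil r x s) (d r)) (at r within {t..})"
      by (rule has_vector_derivative_within_subset) (use assms in auto)
  qed simp
  moreover have "ytil t x s \<in> M" using inv assms by blast
  ultimately show ?thesis
    using ex assms unfolding exact_solution_map_def by fastforce
qed

lemma sum_power_reverse_le:
  fixes q :: real
  assumes "0 \<le> q" "q < 1"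
  shows "(\<Sum>j<n. q ^ (n - Suc j)) \<le> 1 / (1 - q)"
proof -
  have "(\<Sum>j<n. q ^ (n - Suc j)) = (\<Sum>i<n. q ^ i)"
    by (rule sum.nat_diff_reindex)
  also have "\<dots> \<le> (\<Sum>i. q ^ i)"
    using assms by (intro sum_le_suminf summable_geometric) auto
  also have "\<dots> = 1 / (1 - q)"
    using assms by (simp add: suminf_geometric)
  finally show ?thesis .
qed

lemma one_minus_exp_neg_lower_bound:
  fixes x :: real
  assumes "0 \<le> x" "x \<le> 1"
  shows "x * exp (- 1) \<le> 1 - exp (- x)"
proof -
  have "1 - exp (- x) = (exp x - 1) * exp (- x)"
    by (simp add: algebra_simps exp_minus field_simps)
  moreover have "x \<le> exp x - 1" using exp_ge_add_one_self[of x] by linarith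
  moreover have "exp (- 1) \<le> exp (- x)" using assms by simp
  ultimately show ?thesis using assms by (simp add: mult_mono)
qed

text \<open>\<Phi> i j x transports the data x from step i to step j.\<close>
locale stable_propagator =
  fixes \<Phi> :: "nat \<Rightarrow> nat \<Rightarrow> 'a::real_normed_vector \<Rightarrow> 'a"
    and M :: "'a set" and u :: "nat \<Rightarrow> 'a" and K q \<delta> :: real
  assumes propagate_self: "x \<in> M \<Longrightarrow> \<Phi> n n x = x"
    and propagate_trans: "i \<le> j \<Longrightarrow> j \<le> n \<Longrightarrow> x \<in> M \<Longrightarrow> \<Phi> i n x = \<Phi> j n (\<Phi> i j x)"
    and propagate_in: "i \<le> j \<Longrightarrow> x \<in> M \<Longrightarrow> \<Phi> i j x \<in> M"
    and trajectory: "i \<le> j \<Longrightarrow> \<Phi> i j (u i) = u j"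
    and trajectory_in: "u i \<in> M"
    and contracts: "i \<le> j \<Longrightarrow> x1 \<in> M \<Longrightarrow> x2 \<in> M \<Longrightarrow>
      norm (x1 - u i) \<le> \<delta> \<Longrightarrow> norm (x2 - u i) \<le> \<delta> \<Longrightarrow>
      norm (\<Phi> i j x1 - \<Phi> i j x2) \<le> K * q ^ (j - i) * norm (x1 - x2)"
    and K_ge_1: "1 \<le> K" and q_nonneg: "0 \<le> q" and q_less_1: "q < 1"
begin

lemma step_stays_near:
  assumes "x \<in> M" "norm (x - u j) \<le> r" "K * r \<le> \<delta>"
  shows "norm (\<Phi> j (Suc j) x - u (Suc j)) \<le> \<delta>"
proof -
  have "0 \<le> r" using assms(2) norm_ge_zero order_trans by blast
  then have "r \<le> \<delta>" using assms(3) K_ge_1 mult_right_mono[of 1 K r] by linarith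
  then have "norm (\<Phi> j (Suc j) x - \<Phi> j (Suc j) (u j)) \<le> K * q ^ 1 * norm (x - u j)"
    using contracts[of j "Suc j" x "u j"] assms trajectory_in \<open>0 \<le> r\<close> by simp
  also have "\<dots> \<le> K * 1 * r"
    using assms(2) K_ge_1 q_nonneg q_less_1 by (intro mult_mono) auto
  finally show ?thesis using assms(3) trajectory[of j "Suc j"] by simp
qed

lemma fan_term_bound:
  assumes "j < n" "x \<in> M" "y \<in> M"
    and near_x: "norm (x - u j) \<le> r"
    and near_y: "Suc j < n \<Longrightarrow> norm (y - u (Suc j)) \<le> r"
    and "K * r \<le> \<delta>"
    and local_err: "norm (\<Phi> j (Suc j) x - y) \<le> \<epsilon>"
  shows "norm (\<Phi> (Suc j) n y - \<Phi> j n x) \<le> K * q ^ (n - Suc j) * \<epsilon>"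
proof -
  define z where "z = \<Phi> j (Suc j) x"
  have zM: "z \<in> M" unfolding z_def using propagate_in assms by simp
  have split: "\<Phi> j n x = \<Phi> (Suc j) n z"
    unfolding z_def using propagate_trans assms by simp
  have "0 \<le> \<epsilon>" using local_err norm_ge_zero order_trans by blast
  show ?thesis
  proof (cases "Suc j = n")
    case True
    then have "norm (\<Phi> (Suc j) n y - \<Phi> j n x) \<le> \<epsilon>"
      using split propagate_self zM \<open>y \<in> M\<close> local_err by (simp add: norm_minus_commute z_def)
    also have "\<dots> \<le> K * q ^ (n - Suc j) * \<epsilon>"
      using True K_ge_1 \<open>0 \<le> \<epsilon>\<close> mult_right_mono[of 1 K \<epsilon>] by simp
    finally show ?thesis .
  next
    case False
    have "r \<le> \<delta>" "0 \<le> r"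
      using \<open>K * r \<le> \<delta>\<close> K_ge_1 near_x mult_right_mono[of 1 K r] norm_ge_zero order_trans
      by (smt (verit))+
    then have "norm (\<Phi> (Suc j) n y - \<Phi> (Suc j) n z) \<le> K * q ^ (n - Suc j) * norm (y - z)"
      using contracts zM assms False step_stays_near[of x j r] by (simp add: z_def)
    also have "\<dots> \<le> K * q ^ (n - Suc j) * \<epsilon>"
      using local_err K_ge_1 q_nonneg
      by (intro mult_left_mono) (auto simp: z_def norm_minus_commute)
    finally show ?thesis using split by simp
  qed
qed

theorem global_error_bound:
  assumes Y0: "Y 0 = u 0"
    and YM: "\<And>k. k \<le> N \<Longrightarrow> Y k \<in> M"
    and local_err: "\<And>j. j < N \<Longrightarrow> norm (\<Phi> j (Suc j) (Y j) - Y (Suc j)) \<le> \<epsilon>"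
    and "0 \<le> \<epsilon>"
    and small: "K * (K * \<epsilon> / (1 - q)) \<le> \<delta>"
    and "n \<le> N"
  shows "norm (Y n - u n) \<le> K * \<epsilon> / (1 - q)"
  using \<open>n \<le> N\<close>
proof (induction n rule: less_induct)
  case (less n)
  define B where "B = K * \<epsilon> / (1 - q)"
  have IH: "j < n \<Longrightarrow> norm (Y j - u j) \<le> B" for j
    using less B_def by simp
  have transported: "norm (\<Phi> (Suc j) n (Y (Suc j)) - \<Phi> j n (Y j)) \<le> K * \<epsilon> * q ^ (n - Suc j)"
    if "j < n" for j
    using fan_term_bound[of j n "Y j" "Y (Suc j)" B \<epsilon>] that less.prems YM local_err IH small
    by (simp add: B_def mult_ac)
  have "Y n - u n = (\<Sum>j<n. \<Phi> (Suc j) n (Y (Suc j)) - \<Phi> j n (Y j))"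
    using sum_lessThan_telescope[of "\<lambda>j. \<Phi> j n (Y j)" n] propagate_self[OF YM[OF less.prems]]
      trajectory[of 0 n] Y0 by simp
  then have "norm (Y n - u n) \<le> (\<Sum>j<n. K * \<epsilon> * q ^ (n - Suc j))"
    using transported by (auto intro!: order_trans[OF norm_sum] sum_mono)
  also have "\<dots> = K * \<epsilon> * (\<Sum>j<n. q ^ (n - Suc j))"
    by (simp add: sum_distrib_left)
  also have "\<dots> \<le> K * \<epsilon> * (1 / (1 - q))"
    using sum_power_reverse_le q_nonneg q_less_1 K_ge_1 \<open>0 \<le> \<epsilon>\<close> by (intro mult_left_mono) auto
  finally show ?case by simp
qed

end

lemma exact_flow_stable_propagator:
  assumes exact: "exact_solution_map f d M ytil"
    and invariant: "\<And>t0 x t. 0 \<le> t0 \<Longrightarrow> x \<in> M \<Longrightarrow> t0 \<le> t \<Longrightarrow> ytil t x t0 \<in> M"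
    and y0M: "y0 \<in> M" and "0 < h" and "0 < \<gamma>" and "1 \<le> K"
    and stable: "\<And>t t0 x1 x2. 0 \<le> t0 \<Longrightarrow> t0 \<le> t \<Longrightarrow> x1 \<in> M \<Longrightarrow> x2 \<in> M \<Longrightarrow>
        norm (x1 - ytil t0 y0 0) \<le> \<delta> \<Longrightarrow> norm (x2 - ytil t0 y0 0) \<le> \<delta> \<Longrightarrow>
        norm (ytil t x1 t0 - ytil t x2 t0) \<le> K * exp (- \<gamma> * (t - t0)) * norm (x1 - x2)"
  shows "stable_propagator (\<lambda>i j x. ytil (real j * h) x (real i * h)) M
           (\<lambda>k. ytil (real k * h) y0 0) K (exp (- \<gamma> * h)) \<delta>"
proof -
  have mono: "i \<le> j \<Longrightarrow> real i * h \<le> real j * h" for i j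
    using \<open>0 < h\<close> by (simp add: mult_right_mono)
  have rate: "exp (- \<gamma> * (real j * h - real i * h)) = exp (- \<gamma> * h) ^ (j - i)" if "i \<le> j" for i j
  proof -
    have "- \<gamma> * (real j * h - real i * h) = real (j - i) * (- \<gamma> * h)"
      using that by (simp add: of_nat_diff algebra_simps)
    then show ?thesis by (simp only: exp_of_nat_mult)
  qed
  show ?thesis
  proof unfold_locales
    fix i j n :: nat and x assume "i \<le> j" "j \<le> n" "x \<in> M"
    then show "ytil (real n * h) x (real i * h) = ytil (real n * h) (ytil (real j * h) x (real i * h)) (real j * h)"
      using exact_solution_map_flow[OF exact invariant] mono \<open>0 < h\<close> by simp
  next
    fix i j :: nat assume "i \<le> j"
    then show "ytil (real j * h) (ytil (real i * h) y0 0) (real i * h) = ytil (real j * h) y0 0"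
      using exact_solution_map_flow[OF exact invariant, of 0 "real i * h" "real j * h" y0]
        mono y0M \<open>0 < h\<close> by simp
  next
    fix i j :: nat and x1 x2 assume "i \<le> j" "x1 \<in> M" "x2 \<in> M"
      "norm (x1 - ytil (real i * h) y0 0) \<le> \<delta>" "norm (x2 - ytil (real i * h) y0 0) \<le> \<delta>"
    then show "norm (ytil (real j * h) x1 (real i * h) - ytil (real j * h) x2 (real i * h))
        \<le> K * exp (- \<gamma> * h) ^ (j - i) * norm (x1 - x2)"
      using stable[of "real i * h" "real j * h" x1 x2] mono rate \<open>0 < h\<close> by simp
  qed (use exact_solution_map_initial[OF exact] invariant y0M \<open>0 < h\<close> \<open>0 < \<gamma>\<close> \<open>1 \<le> K\<close> mono
       in auto)
qed

lemma fan_constant_bound: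
  fixes \<gamma> h c :: real
  assumes "0 < \<gamma>" "0 < h" "\<gamma> * h \<le> 1" "0 \<le> c"
  shows "c * h\<^sup>2 / (1 - exp (- \<gamma> * h)) \<le> c * exp 1 / \<gamma> * h"
proof -
  have pos: "0 < \<gamma> * h * exp (- 1)" using assms by simp
  have "c * h\<^sup>2 / (1 - exp (- \<gamma> * h)) \<le> c * h\<^sup>2 / (\<gamma> * h * exp (- 1))"
    using one_minus_exp_neg_lower_bound[of "\<gamma> * h"] pos assms by (intro divide_left_mono) auto
  also have "\<dots> = c * exp 1 / \<gamma> * h"
    using assms by (simp add: exp_minus field_simps power2_eq_square)
  finally show ?thesis .
qed

lemma exact_flow_global_error_bound:
  fixes Y :: "nat \<Rightarrow> 'a::real_normed_vector"
  assumes exact: "exact_solution_map f d M ytil"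
    and invariant: "\<And>t0 x t. 0 \<le> t0 \<Longrightarrow> x \<in> M \<Longrightarrow> t0 \<le> t \<Longrightarrow> ytil t x t0 \<in> M"
    and y0M: "y0 \<in> M" and "0 < \<gamma>" and "1 \<le> K"
    and stable: "\<And>t t0 x1 x2. 0 \<le> t0 \<Longrightarrow> t0 \<le> t \<Longrightarrow> x1 \<in> M \<Longrightarrow> x2 \<in> M \<Longrightarrow>
        norm (x1 - ytil t0 y0 0) \<le> \<delta> \<Longrightarrow> norm (x2 - ytil t0 y0 0) \<le> \<delta> \<Longrightarrow>
        norm (ytil t x1 t0 - ytil t x2 t0) \<le> K * exp (- \<gamma> * (t - t0)) * norm (x1 - x2)"
    and Y0: "Y 0 = y0" and YM: "\<And>k. k \<le> N \<Longrightarrow> Y k \<in> M"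
    and local_err: "\<And>j. j < N \<Longrightarrow>
        norm (ytil (real (Suc j) * h) (Y j) (real j * h) - Y (Suc j)) \<le> c * h\<^sup>2"
    and "0 \<le> c" and "0 < h" and "\<gamma> * h \<le> 1"
    and tube: "K * (K * c * exp 1 / \<gamma> * h) \<le> \<delta>"
    and "n \<le> N"
  shows "norm (Y n - ytil (real n * h) y0 0) \<le> K * c * exp 1 / \<gamma> * h"
proof -
  interpret stable_propagator "\<lambda>i j x. ytil (real j * h) x (real i * h)" M
      "\<lambda>k. ytil (real k * h) y0 0" K "exp (- \<gamma> * h)" \<delta>
    using exact_flow_stable_propagator[OF exact invariant y0M \<open>0 < h\<close> \<open>0 < \<gamma>\<close> \<open>1 \<le> K\<close> stable] .
  have bound: "K * (c * h\<^sup>2) / (1 - exp (- \<gamma> * h)) \<le> K * c * exp 1 / \<gamma> * h"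
    using fan_constant_bound[of \<gamma> h "K * c"] assms by (simp add: mult.assoc)
  then have "K * (K * (c * h\<^sup>2) / (1 - exp (- \<gamma> * h))) \<le> \<delta>"
    using \<open>1 \<le> K\<close> tube mult_left_mono[OF bound, of K] by simp
  then have "norm (Y n - ytil (real n * h) y0 0) \<le> K * (c * h\<^sup>2) / (1 - exp (- \<gamma> * h))"
    using global_error_bound[of Y N "c * h\<^sup>2" n] assms
      exact_solution_map_initial[OF exact _ y0M, of 0] by simp
  with bound show ?thesis by linarith
qed

theorem theorem1:
  fixes f :: "'a::real_normed_vector \<Rightarrow> 'd \<Rightarrow> 'a"
    and d :: "real \<Rightarrow> 'd"
    and ytil :: "real \<Rightarrow> 'a \<Rightarrow> real \<Rightarrow> 'a"
    and M :: "'a set"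
    and y0 :: 'a
    and Y :: "real \<Rightarrow> nat \<Rightarrow> nat \<Rightarrow> 'a"
    and \<delta> \<gamma> C1 C2 :: real
  assumes exact: "exact_solution_map f d M ytil"
    and invariant: "\<And>t0 x t. 0 \<le> t0 \<Longrightarrow> x \<in> M \<Longrightarrow> t0 \<le> t \<Longrightarrow> ytil t x t0 \<in> M"
    and y0M: "y0 \<in> M"
    and delta_pos: "\<delta> > 0" and gamma_pos: "\<gamma> > 0"
    and stable: "\<And>t t0 x1 x2. 0 \<le> t0 \<Longrightarrow> t0 \<le> t \<Longrightarrow> x1 \<in> M \<Longrightarrow> x2 \<in> M \<Longrightarrow>
        norm (x1 - ytil t0 y0 0) \<le> \<delta> \<Longrightarrow> norm (x2 - ytil t0 y0 0) \<le> \<delta> \<Longrightarrow>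
        norm (ytil t x1 t0 - ytil t x2 t0) \<le> C1 * exp (- \<gamma> * (t - t0)) * norm (x1 - x2)"
    and init: "\<And>h N. h > 0 \<Longrightarrow> Y h N 0 = y0"
    and local_err: "\<And>h N n. h > 0 \<Longrightarrow> n < N \<Longrightarrow>
        norm (ytil (real (Suc n) * h) (Y h N n) (real n * h) - Y h N (Suc n)) \<le> C2 * h\<^sup>2"
    and onM: "\<And>h N n. h > 0 \<Longrightarrow> n \<le> N \<Longrightarrow> Y h N n \<in> M"
  shows "\<exists>C h0. h0 > 0 \<and> (\<forall>h N n. 0 < h \<longrightarrow> h < h0 \<longrightarrow> n \<le> N \<longrightarrow>
            norm (Y h N n - ytil (real n * h) y0 0) \<le> C * h)"
proof -
  define K where "K = max \<bar>C1\<bar> 1"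
  define C where "C = K * \<bar>C2\<bar> * exp 1 / \<gamma>"
  define h0 where "h0 = min (1 / \<gamma>) (\<delta> / (K * C + 1))"
  have "1 \<le> K" "0 \<le> C" using gamma_pos by (auto simp: K_def C_def)
  then have denom_pos: "0 < K * C + 1" by (simp add: add_nonneg_pos)
  have stableK: "norm (ytil t x1 t0 - ytil t x2 t0) \<le> K * exp (- \<gamma> * (t - t0)) * norm (x1 - x2)"
    if "0 \<le> t0" "t0 \<le> t" "x1 \<in> M" "x2 \<in> M" "norm (x1 - ytil t0 y0 0) \<le> \<delta>"
      "norm (x2 - ytil t0 y0 0) \<le> \<delta>" for t t0 x1 x2
  proof -
    have "C1 * (exp (- \<gamma> * (t - t0)) * norm (x1 - x2)) \<le> K * (exp (- \<gamma> * (t - t0)) * norm (x1 - x2))"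
      by (rule mult_right_mono) (auto simp: K_def)
    then show ?thesis using stable[OF that] by (simp only: mult.assoc)
  qed
  have "norm (Y h N n - ytil (real n * h) y0 0) \<le> C * h" if "0 < h" "h < h0" "n \<le> N" for h N n
  proof (unfold C_def, rule exact_flow_global_error_bound[OF exact invariant y0M gamma_pos \<open>1 \<le> K\<close>])
    show "\<gamma> * h \<le> 1" using that gamma_pos by (simp add: h0_def field_simps)
    have "h * (K * C + 1) < \<delta>" using denom_pos that by (simp add: h0_def pos_less_divide_eq)
    then show "K * (K * \<bar>C2\<bar> * exp 1 / \<gamma> * h) \<le> \<delta>"
      using that by (simp add: C_def algebra_simps)
    show "norm (ytil (real (Suc j) * h) (Y h N j) (real j * h) - Y h N (Suc j)) \<le> \<bar>C2\<bar> * h\<^sup>2"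
      if "j < N" for j
      using local_err[OF \<open>0 < h\<close> that] mult_right_mono[OF abs_ge_self[of C2], of "h\<^sup>2"] by simp
  qed (use stableK that init onM in auto)
  moreover have "0 < h0" using gamma_pos delta_pos denom_pos by (simp add: h0_def)
  ultimately show ?thesis by blast
qed

end
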